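(* Let $T$ be a chain with entries in $\{1,2\}$, not consisting only of $1$'s and not consisting only of $2$'s, such that the maximal initial block of consecutive $2$'s of $T$ and the maximal final block of consecutive $2$'s of $T$ each have even length (possibly zero), and suppose $\mathcal{Z}(T)>\tfrac13$. Write $T=[1^{e^1_1}2^{e^2_1}1^{e^1_2}2^{e^2_2}\cdots1^{e^1_n}2^{e^2_n}]$, where all $e^j_i$ are positive integers except that $e^1_1$ and $e^2_n$ may be $0$. Then there is $j\in\{1,2\}$ such that $e^j_i\le 2$ for all $i\in\{1,\dots,n\}$.
   Context: A chain is a finite sequence $T=[a_1a_2\dots a_n]$ of positive integers; $c^e$ denotes $e$ consecutive copies of the entry $c$. For a chain $S=[s_1\dots s_m]$, $[0;s_1,\dots,s_m]$ and $[s_1;s_2,\dots,s_m]$ denote finite continued fractions. Define $\mathcal{Z}(T)=\big(\max_{1\le i\le n}([a_i;a_{i+1},\dots,a_n]+[0;a_{i-1},\dots,a_1])\big)^{-1}$, where for $i=1$ the second summand is $0$. *)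

theory Defs
  imports Complex_Main
begin

text \<open>Chains are lists of positive natural numbers.
  cf0 [s1,...,sm] is the finite continued fraction [0; s1, ..., sm] (with cf0 [] = 0),
  so [s1; s2, ..., sm] = s1 + cf0 [s2, ..., sm].\<close>

fun cf0 :: "nat list \<Rightarrow> real" where
  "cf0 [] = 0"
| "cf0 (s # ss) = 1 / (real s + cf0 ss)"

text \<open>Using 0-based index i (paper index i+1):
  [a_i; a_{i+1},...,a_n] = T!i + cf0 (drop (Suc i) T) and
  [0; a_{i-1},...,a_1] = cf0 (rev (take i T)).\<close>

definition chain_term :: "nat list \<Rightarrow> nat \<Rightarrow> real" where
  "chain_term T i = (real (T ! i) + cf0 (drop (Suc i) T)) + cf0 (rev (take i T))"

definition Zc :: "nat list \<Rightarrow> real" where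
  "Zc T = inverse (Max {chain_term T i | i. i < length T})"

end

(*
  If some e1 i and some e2 j exceed 2, then T contains both 111 and 222, and after reversing T if
  necessary (the hypotheses are symmetric) an occurrence of 111 precedes one of 222. All terms of T
  are below 3; since cf0 (1 # 1 # Y) = 1 - cf0 (2 # Y), the term at the first 2 of
  T = rev Y @ [1, 1, 2, 2] @ X is below 3 exactly when cf0 Y < cf0 X. Scanning rightwards from the
  11, these inequalities and the parity of the final block of 2s force the next letters to be 1 or
  2211, and the reversed prefix M keeps satisfying phi2211 (cf0 M) < cf0 M. When the scan reaches
  11222, the block of 2s must be 2222 followed by 11, and the terms at its two ends give
  cf0 M < phi2211 (cf0 R) and cf0 R < phi2211 (cf0 M), which is impossible for such M.
*)
theory Submission
  imports Defs "HOL-Library.Sublist"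
begin

lemma cf0_nonneg: "0 \<le> cf0 z"
  by (induction z) auto

lemma cf0_le_1: "0 \<notin> set z \<Longrightarrow> cf0 z \<le> 1"
  by (induction z) (auto simp: divide_simps add_increasing2 cf0_nonneg)

lemma cf0_Cons_le: "0 < s \<Longrightarrow> 0 \<le> y \<Longrightarrow> y \<le> cf0 z \<Longrightarrow> cf0 (s # z) \<le> 1 / (real s + y)"
  by (simp add: frac_le)

lemma cf0_Cons_ge: "0 < s \<Longrightarrow> cf0 z \<le> y \<Longrightarrow> 1 / (real s + y) \<le> cf0 (s # z)"
  by (simp add: frac_le cf0_nonneg add_pos_nonneg)

lemma cf0_11: "cf0 (1 # 1 # z) = 1 - cf0 (2 # z)"
  using cf0_nonneg[of z] by (simp add: field_simps)

lemma cf0_2_less_2_iff: "cf0 (2 # y) < cf0 (2 # z) \<longleftrightarrow> cf0 z < cf0 y"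
  using cf0_nonneg[of y] cf0_nonneg[of z] by (simp add: divide_simps)

lemma cf0_1_ge: "0 \<notin> set z \<Longrightarrow> 1/2 \<le> cf0 (1 # z)"
  using cf0_Cons_ge[of 1 z 1] cf0_le_1 by simp

lemma cf0_2_ge: "0 \<notin> set z \<Longrightarrow> 1/3 \<le> cf0 (2 # z)"
  using cf0_Cons_ge[of 2 z 1] cf0_le_1 by simp

lemma cf0_2_le: "cf0 (2 # z) \<le> 1/2"
  using cf0_Cons_le[of 2 0 z] cf0_nonneg by simp

lemma cf0_12_ge: "2/3 \<le> cf0 (1 # 2 # z)"
  using cf0_Cons_ge[of 1 "2#z" "1/2"] cf0_2_le by simp

lemma cf0_21_le: "0 \<notin> set z \<Longrightarrow> cf0 (2 # 1 # z) \<le> 2/5"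
  using cf0_Cons_le[of 2 "1/2" "1#z"] cf0_1_ge by simp

lemma cf0_222_le: "cf0 (2 # 2 # 2 # z) \<le> 5/12"
proof -
  have "2/5 \<le> cf0 (2 # 2 # z)"
    using cf0_Cons_ge[of 2 "2#z" "1/2"] cf0_2_le by simp
  then show ?thesis
    using cf0_Cons_le[of 2 "2/5" "2#2#z"] by simp
qed

(* cf0 (2 # 2 # 1 # 1 # z) = phi2211 (cf0 z); for x \<ge> 0, phi2211 x < x holds exactly when x
   exceeds the fixed point (sqrt 221 - 9) / 14 of phi2211. *)
definition phi2211 :: "real \<Rightarrow> real" where
  "phi2211 x = (5 + 3 * x) / (12 + 7 * x)"

lemma cf0_2211: "cf0 (2 # 2 # 1 # 1 # z) = phi2211 (cf0 z)"
  using cf0_nonneg[of z] by (simp add: phi2211_def field_simps)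

lemma phi2211_strict_mono: "0 \<le> x \<Longrightarrow> x < y \<Longrightarrow> phi2211 x < phi2211 y"
  by (simp add: phi2211_def field_simps)

lemma phi2211_ge: "0 \<le> x \<Longrightarrow> 5/12 \<le> phi2211 x"
  by (simp add: phi2211_def field_simps)

lemma phi2211_less_if_ge_half: "1/2 \<le> x \<Longrightarrow> phi2211 x < x"
proof -
  assume "1/2 \<le> x"
  then have "7 * (1/2) * (1/2) \<le> 7 * x * x"
    by (intro mult_mono) auto
  with \<open>1/2 \<le> x\<close> show ?thesis
    by (simp add: phi2211_def field_simps)
qed

declare cf0.simps(2) [simp del]

definition chain_terms_below :: "real \<Rightarrow> nat list \<Rightarrow> bool" where
  "chain_terms_below r T \<longleftrightarrow>
     (\<forall>xs c ys. T = xs @ c # ys \<longrightarrow> real c + cf0 ys + cf0 (rev xs) < r)"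

lemma chain_terms_belowD:
  "chain_terms_below r (xs @ c # ys) \<Longrightarrow> real c + cf0 ys + cf0 (rev xs) < r"
  unfolding chain_terms_below_def by blast

lemma chain_terms_below_rev: "chain_terms_below r T \<Longrightarrow> chain_terms_below r (rev T)"
  unfolding chain_terms_below_def
  by (metis add.commute add.assoc rev_append rev_rev_ident rev.simps(2) append_assoc append_Cons append_Nil)

lemma chain_terms_below_if_Zc_gt:
  assumes "0 < r" and "inverse r < Zc T"
  shows "chain_terms_below r T"
  unfolding chain_terms_below_def
proof (intro allI impI)
  fix xs c ys
  assume T: "T = xs @ c # ys"
  define S where "S = chain_term T ` {..<length T}"
  have "{chain_term T i | i. i < length T} = S"
    unfolding S_def by auto
  then have "Zc T = inverse (Max S)"
    unfolding Zc_def by simp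
  with assms have "Max S < r"
    by (metis inverse_less_iff_less inverse_positive_iff_positive less_trans)
  moreover have "chain_term T (length xs) \<le> Max S"
    unfolding S_def using T by simp
  moreover have "chain_term T (length xs) = real c + cf0 ys + cf0 (rev xs)"
    unfolding chain_term_def T by simp
  ultimately show "real c + cf0 ys + cf0 (rev xs) < r"
    by simp
qed

abbreviation trailing_2s :: "nat list \<Rightarrow> nat" where
  "trailing_2s T \<equiv> length (takeWhile (\<lambda>x. x = 2) (rev T))"

lemma chain_11_22_cf0_less:
  assumes "chain_terms_below 3 T" and "T = rev Y @ [1, 1, 2, 2] @ X"
  shows "cf0 Y < cf0 X"
proof -
  have "T = (rev Y @ [1, 1]) @ 2 # 2 # X"
    using assms(2) by simp
  then have "2 + cf0 (2 # X) + cf0 (1 # 1 # Y) < 3"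
    using chain_terms_belowD assms(1) by fastforce
  then have "cf0 (2 # X) < cf0 (2 # Y)"
    using cf0_11[of Y] by linarith
  then show ?thesis
    by (simp only: cf0_2_less_2_iff)
qed

lemma chain_11_2_next_2:
  assumes "set T \<subseteq> {1, 2}" and "chain_terms_below 3 T" and "even (trailing_2s T)"
    and T: "T = rev Y @ [1, 1, 2] @ X"
  obtains X' where "X = 2 # X'" and "cf0 Y < cf0 X'"
proof (cases X)
  case Nil
  then show ?thesis
    using assms(3) T by simp
next
  case (Cons x X')
  have "0 \<notin> set (x # X')" and "0 \<notin> set Y"
    using assms(1) T Cons by auto
  have "x \<noteq> 1"
  proof
    assume "x = 1"
    have "T = (rev Y @ [1, 1]) @ 2 # 1 # X'"
      using T Cons \<open>x = 1\<close> by simp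
    then have "2 + cf0 (1 # X') + cf0 (1 # 1 # Y) < 3"
      using chain_terms_belowD assms(2) by fastforce
    moreover have "1/2 \<le> cf0 (1 # X')" and "1/2 \<le> cf0 (1 # 1 # Y)"
      using cf0_1_ge[of X'] cf0_1_ge[of "1 # Y"] \<open>0 \<notin> set (x # X')\<close> \<open>0 \<notin> set Y\<close> by auto
    ultimately show False
      by linarith
  qed
  then have "x = 2"
    using assms(1) T Cons by auto
  then show ?thesis
    using that Cons chain_11_22_cf0_less assms(2) T by simp
qed

lemma chain_221_next_1:
  assumes "set T \<subseteq> {1, 2}" and "chain_terms_below 3 T" and T: "T = P @ [2, 2, 1] @ X"
  obtains R where "X = 1 # R"
proof -
  have "T = (P @ [2]) @ 2 # 1 # X"
    using T by simp
  then have "2 + cf0 (1 # X) + cf0 (2 # rev P) < 3"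
    using chain_terms_belowD assms(2) by fastforce
  moreover have "0 \<notin> set (rev P)"
    using assms(1) T by auto
  ultimately have "cf0 (1 # X) < 2/3"
    using cf0_2_ge[of "rev P"] by linarith
  moreover have "X \<noteq> []"
    using calculation by (auto simp: cf0.simps(2))
  moreover have "hd X \<noteq> 2"
    using calculation cf0_12_ge[of "tl X"] by (cases X) auto
  moreover have "set X \<subseteq> {1, 2}"
    using assms(1) T by auto
  ultimately show ?thesis
    using that by (cases X) auto
qed

lemma cf0_2_gt_5_12:
  assumes "set X \<subseteq> {1, 2}" and "5/12 < cf0 (2 # X)"
  shows "X = [] \<or> (\<exists>R. X = 2 # 1 # R)"
proof -
  consider "X = []" | R where "X = 1 # R" | "X = [2]" | R where "X = 2 # 1 # R" | R where "X = 2 # 2 # R"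
    using assms(1) by (cases X rule: remdups_adj.cases) auto
  then show ?thesis
  proof cases
    case (2 R)
    then have "0 \<notin> set R"
      using assms(1) by auto
    then show ?thesis
      using assms(2) cf0_21_le[of R] \<open>X = 1 # R\<close> by simp
  next
    case 3
    then show ?thesis
      using assms(2) by (simp add: cf0.simps(2))
  next
    case (5 R)
    then show ?thesis
      using assms(2) cf0_222_le[of R] by simp
  qed auto
qed

lemma chain_no_11_222:
  assumes "set T \<subseteq> {1, 2}" and "chain_terms_below 3 T" and "even (trailing_2s T)"
    and T: "T = rev M @ [1, 1, 2, 2, 2] @ X"
    and M: "phi2211 (cf0 M) < cf0 M"
  shows False
proof -
  have "cf0 M < cf0 (2 # X)"
    using chain_11_22_cf0_less assms(2) T by simp
  moreover have "5/12 < cf0 M"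
    using phi2211_ge[OF cf0_nonneg] M by (rule le_less_trans)
  moreover have "set X \<subseteq> {1, 2}"
    using assms(1) T by auto
  ultimately have "X = [] \<or> (\<exists>R. X = 2 # 1 # R)"
    using cf0_2_gt_5_12 by simp
  moreover have "X \<noteq> []"
    using assms(3) T by auto
  ultimately obtain R' where "X = 2 # 1 # R'"
    by blast
  then have "T = (rev M @ [1, 1, 2, 2]) @ [2, 2, 1] @ R'"
    using T by simp
  then obtain R where "R' = 1 # R"
    using chain_221_next_1 assms(1,2) by blast
  with T \<open>X = 2 # 1 # R'\<close> have T': "T = rev M @ [1, 1, 2, 2] @ [2, 2, 1, 1] @ R"
    by simp
  then have "cf0 M < phi2211 (cf0 R)"
    using chain_11_22_cf0_less[OF assms(2), of M "[2, 2, 1, 1] @ R"] cf0_2211[of R]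
    by simp
  moreover have "cf0 R < phi2211 (cf0 M)"
    using chain_11_22_cf0_less[OF chain_terms_below_rev[OF assms(2)], of R "[2, 2, 1, 1] @ M"] T' cf0_2211[of M]
    by simp
  then have "phi2211 (cf0 R) < phi2211 (cf0 M)"
    using phi2211_strict_mono cf0_nonneg M by (meson less_trans)
  ultimately show False
    using M by simp
qed

lemma chain_11_2_next_211:
  assumes "set T \<subseteq> {1, 2}" and "chain_terms_below 3 T" and "even (trailing_2s T)"
    and T: "T = rev M @ [1, 1, 2] @ X" and M: "phi2211 (cf0 M) < cf0 M"
  obtains R where "X = 2 # 1 # 1 # R"
proof -
  obtain X' where X: "X = 2 # X'" and "cf0 M < cf0 X'"
    using chain_11_2_next_2 assms(1-3) T by blast
  have "set X' \<subseteq> {1, 2}"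
    using assms(1) T X by auto
  then consider "X' = []" | X'' where "X' = 2 # X''" | X'' where "X' = 1 # X''"
    by (cases X') auto
  then show ?thesis
  proof cases
    case 1
    then show ?thesis
      using \<open>cf0 M < cf0 X'\<close> cf0_nonneg[of M] by simp
  next
    case (2 X'')
    then have "T = rev M @ [1, 1, 2, 2, 2] @ X''"
      using T X by simp
    then show ?thesis
      using chain_no_11_222[OF assms(1-3) _ M] by blast
  next
    case (3 X'')
    then have "T = (rev M @ [1, 1]) @ [2, 2, 1] @ X''"
      using T X by simp
    then obtain R where "X'' = 1 # R"
      using chain_221_next_1 assms(1,2) by blast
    then show ?thesis
      using that X 3 by simp
  qed
qed

lemma chain_no_222_after_11:
  assumes "set T \<subseteq> {1, 2}" and "chain_terms_below 3 T" and "even (trailing_2s T)"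
  shows "T = rev M @ [1, 1] @ w \<Longrightarrow> phi2211 (cf0 M) < cf0 M \<Longrightarrow> sublist [2, 2, 2] w \<Longrightarrow> False"
proof (induction w arbitrary: M rule: length_induct)
  case (1 w)
  note T = "1.prems"(1) and M = "1.prems"(2) and sub = "1.prems"(3)
  have "set w \<subseteq> {1, 2}" and "0 \<notin> set M"
    using assms(1) T by auto
  then consider w' where "w = 1 # w'" | X where "w = 2 # X" | "w = []"
    by (cases w) auto
  then show False
  proof cases
    case (1 w')
    have "T = rev (1 # M) @ [1, 1] @ w'"
      using T 1 by simp
    moreover have "phi2211 (cf0 (1 # M)) < cf0 (1 # M)"
      using phi2211_less_if_ge_half cf0_1_ge \<open>0 \<notin> set M\<close> by blast
    moreover have "sublist [2, 2, 2] w'"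
      using sub 1 by (simp add: sublist_Cons_right)
    ultimately show False
      using "1.IH" 1 by (metis length_Cons lessI)
  next
    case (2 X)
    then obtain R where R: "w = 2 # 2 # 1 # 1 # R"
      using chain_11_2_next_211 assms T M by (metis append_Cons append_Nil)
    have "T = rev (2 # 2 # 1 # 1 # M) @ [1, 1] @ R"
      using T R by simp
    moreover have "phi2211 (cf0 (2 # 2 # 1 # 1 # M)) < cf0 (2 # 2 # 1 # 1 # M)"
      using phi2211_strict_mono[OF _ M] cf0_nonneg[of "2 # 2 # 1 # 1 # M"]
      by (simp only: cf0_2211)
    moreover have "sublist [2, 2, 2] R"
      using sub R by (simp add: sublist_Cons_right)
    ultimately show False
      using "1.IH" R by (metis length_Cons less_Suc_eq)
  next
    case 3
    then show False
      using sub by simp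
  qed
qed

lemma chain_no_222_after_111:
  assumes "set T \<subseteq> {1, 2}" and "chain_terms_below 3 T" and "even (trailing_2s T)"
    and "T = a @ [1, 1, 1] @ b" and "sublist [2, 2, 2] b"
  shows False
proof -
  have "T = rev (1 # rev a) @ [1, 1] @ b"
    using assms(4) by simp
  moreover have "0 \<notin> set (rev a)"
    using assms(1,4) by auto
  then have "phi2211 (cf0 (1 # rev a)) < cf0 (1 # rev a)"
    using phi2211_less_if_ge_half cf0_1_ge by blast
  ultimately show False
    using chain_no_222_after_11 assms(1-3,5) by blast
qed

lemma disjoint_occurrences_apart:
  assumes "a @ xs @ b = c @ ys @ d" and "set xs \<inter> set ys = {}" and "ys \<noteq> []"
    and "length a \<le> length c"
  shows "length a + length xs \<le> length c"
proof (rule ccontr)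
  assume "\<not> ?thesis"
  then have "length c - length a < length xs"
    using assms(4) by linarith
  then have "(a @ xs @ b) ! length c \<in> set xs"
    using assms(4) by (simp add: nth_append)
  moreover have "(c @ ys @ d) ! length c \<in> set ys"
    using assms(3) by (simp add: nth_append)
  ultimately show False
    using assms(1,2) by auto
qed

lemma sublist_before_or_after_disjoint:
  assumes T: "T = a @ xs @ b" and "sublist ys T" and disj: "set xs \<inter> set ys = {}" and "xs \<noteq> []"
  shows "sublist ys a \<or> sublist ys b"
proof (cases "ys = []")
  case False
  obtain c d where T': "T = c @ ys @ d"
    using \<open>sublist ys T\<close> by (auto simp: sublist_def)
  show ?thesis
  proof (cases "length a \<le> length c")
    case True
    then have "length a + length xs \<le> length c"
      using disjoint_occurrences_apart T T' disj False by metis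
    then have "b = drop (length a + length xs) c @ ys @ d"
      using arg_cong[OF T', of "drop (length a + length xs)"] T by simp
    then show ?thesis
      by simp
  next
    case False
    then have "length c + length ys \<le> length a"
      using disjoint_occurrences_apart[of c ys d a xs b] T T' disj \<open>xs \<noteq> []\<close> by auto
    then have "a = c @ ys @ take (length a - length c - length ys) d"
      using arg_cong[OF T, of "take (length a)"] T' by simp
    then show ?thesis
      by (metis sublist_appendI)
  qed
qed simp

lemma sublist_concat_map: "i \<in> set is \<Longrightarrow> sublist (f i) (concat (map f is))"
  by (metis split_list concat_append map_append list.map(2) concat.simps(2) sublist_appendI)

lemma sublist_replicate_3: "3 \<le> e \<Longrightarrow> sublist [x, x, x] (replicate e x)"
  by (metis replicate_add le_add_diff_inverse sublist_append_rightI numeral_3_eq_3 replicate.simps)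

lemma chain_no_111_and_222:
  assumes "set T \<subseteq> {1, 2}" and "chain_terms_below 3 T"
    and "even (length (takeWhile (\<lambda>x. x = 2) T))" and "even (trailing_2s T)"
    and "sublist [1, 1, 1] T" and "sublist [2, 2, 2] T"
  shows False
proof -
  obtain a b where T: "T = a @ [1, 1, 1] @ b"
    using assms(5) by (auto simp: sublist_def)
  then have "sublist [2, 2, 2] a \<or> sublist [2, 2, 2] b"
    using sublist_before_or_after_disjoint[OF T assms(6)] by simp
  then show False
  proof
    assume "sublist [2, 2, 2] a"
    then have "sublist [2, 2, 2] (rev a)"
      by (simp add: sublist_rev_right)
    moreover have "rev T = rev b @ [1, 1, 1] @ rev a"
      using T by simp
    moreover have "chain_terms_below 3 (rev T)"
      using chain_terms_below_rev assms(2) by blast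
    moreover have "set (rev T) \<subseteq> {1, 2}" and "even (trailing_2s (rev T))"
      using assms(1,3) by simp_all
    ultimately show False
      using chain_no_222_after_111 by blast
  next
    assume "sublist [2, 2, 2] b"
    then show False
      using chain_no_222_after_111 assms(1,2,4) T by blast
  qed
qed

theorem lemma3p6:
  fixes T :: "nat list" and n :: nat and e1 e2 :: "nat \<Rightarrow> nat"
  assumes "set T \<subseteq> {1, 2}"
    and "1 \<in> set T" and "2 \<in> set T"
    and "even (length (takeWhile (\<lambda>x. x = 2) T))"
    and "even (length (takeWhile (\<lambda>x. x = 2) (rev T)))"
    and "Zc T > 1 / 3"
    and "n \<ge> 1"
    and "T = concat (map (\<lambda>i. replicate (e1 i) 1 @ replicate (e2 i) 2) [1..<Suc n])"
    and "\<forall>i\<in>{2..n}. e1 i > 0"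
    and "\<forall>i\<in>{1..<n}. e2 i > 0"
  shows "(\<forall>i\<in>{1..n}. e1 i \<le> 2) \<or> (\<forall>i\<in>{1..n}. e2 i \<le> 2)"
proof (rule ccontr)
  assume "\<not> ?thesis"
  then obtain i j where i: "i \<in> {1..n}" "3 \<le> e1 i" and j: "j \<in> {1..n}" "3 \<le> e2 j"
    by (auto simp: not_le)
  have blocks: "sublist (replicate (e1 k) 1 @ replicate (e2 k) 2) T" if "k \<in> {1..n}" for k
  proof -
    have "k \<in> set [1..<Suc n]"
      using that by (simp del: upt_Suc)
    then show ?thesis
      unfolding assms(8) by (rule sublist_concat_map)
  qed
  have "sublist [1, 1, 1] T"
    using sublist_replicate_3[OF i(2)] blocks[OF i(1)]
    by (meson sublist_order.order_trans sublist_append_rightI)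
  moreover have "sublist [2, 2, 2] T"
    using sublist_replicate_3[OF j(2)] blocks[OF j(1)]
    by (meson sublist_order.order_trans sublist_append_leftI)
  moreover have "chain_terms_below 3 T"
    using chain_terms_below_if_Zc_gt[of 3] assms(6) by simp
  ultimately show False
    using chain_no_111_and_222 assms(1,4,5) by blast
qed

end
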